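(* Fix $0<\alpha<1/2$. Consider the random binary tree generated by the following process: start from a single root node of depth $0$; each node $\Omega$ of depth $d(\Omega)$ is split into two children independently with probability $p_{split}(\Omega)=\alpha^{d(\Omega)}$, and otherwise becomes a leaf. Let $K$ be the number of leaves of the resulting tree. Then there exist constants $C>0$ and $C_K>0$ such that for all integers $k\ge 2$, $$\mathbb{P}(K>k)\le C\, e^{-C_K\, k\log k}.$$
   Context: $K=(X+1)/2$, where $X$ is the total number of nodes of the tree. *)

theory Defs
  imports "HOL-Probability.Probability"
begin

text \<open>The state after processing depths 0..n-1 is a pair (z, l): z = number of nodes at
  depth n (not yet processed), l = number of leaves found at depths < n.
  Each of the z nodes at depth d splits independently with probability alpha^d,
  so the number s of splitting nodes is Binomial(z, alpha^d); they produce 2s nodes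
  at depth d+1, and the other z - s nodes become leaves.\<close>

fun tree_gen :: "real \<Rightarrow> nat \<Rightarrow> (nat \<times> nat) pmf" where
  "tree_gen \<alpha> 0 = return_pmf (1, 0)"
| "tree_gen \<alpha> (Suc d) =
     bind_pmf (tree_gen \<alpha> d)
       (\<lambda>(z, l). map_pmf (\<lambda>s. (2 * s, l + (z - s))) (binomial_pmf z (\<alpha> ^ d)))"

text \<open>P(K > k): the number of leaves found up to depth n is nondecreasing in n and
  equals K once the tree is exhausted, so the event {K > k} is the increasing union
  of the events {leaves up to depth n > k} (up to the null event of an infinite tree).\<close>

definition leaf_tail :: "real \<Rightarrow> nat \<Rightarrow> real" where
  "leaf_tail \<alpha> k = (SUP n. measure_pmf.prob (tree_gen \<alpha> n) {(z, l). l > k})"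

end

theory Submission
  imports Defs
begin

text \<open>For a weight \<open>x \<ge> 1\<close> on leaves and a weight \<open>h d\<close> on open nodes at depth \<open>d\<close>, the
  exponential moment \<open>E[x ^ leaves * h n ^ nodes]\<close> after \<open>n\<close> generations is nonincreasing
  in \<open>n\<close> as soon as \<open>\<alpha>^d h(d+1)^2 + (1 - \<alpha>^d) x \<le> h d\<close>, because a node at depth \<open>d\<close>
  contributes \<open>h(d+1)^2\<close> if it splits and \<open>x\<close> if it becomes a leaf. Markov's inequality then
  gives \<open>P(K > k) \<le> h 0 / x^(k+1)\<close>. Taking \<open>x \<approx> \<alpha>^-D\<close> with \<open>2^D \<approx> k\<close> and the doubly
  exponential \<open>h d = (8x)^(2^(D-d)) / 2\<close> yields \<open>P(K > k) \<le> (512/k)^(k/2)\<close>.\<close>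

lemma nn_integral_binomial_pmf_power:
  fixes a b p :: real
  assumes p: "0 \<le> p" "p \<le> 1" and ab: "0 \<le> a" "0 \<le> b"
  shows "(\<integral>\<^sup>+s. ennreal (a ^ (n - s) * b ^ s) \<partial>binomial_pmf n p) = ennreal ((p * b + (1 - p) * a) ^ n)"
proof -
  have "(\<integral>\<^sup>+s. ennreal (a ^ (n - s) * b ^ s) \<partial>binomial_pmf n p)
      = (\<Sum>s\<le>n. ennreal (a ^ (n - s) * b ^ s) * pmf (binomial_pmf n p) s)"
    using p by (intro nn_integral_measure_pmf_support) (auto simp: set_pmf_binomial_eq split: if_splits)
  also have "\<dots> = ennreal (\<Sum>s\<le>n. of_nat (n choose s) * (p * b) ^ s * ((1 - p) * a) ^ (n - s))"
    using p ab by (subst sum_ennreal[symmetric]) (auto simp: ennreal_mult[symmetric] power_mult_distrib mult_ac intro!: sum.cong)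
  also have "\<dots> = ennreal ((p * b + (1 - p) * a) ^ n)"
    by (simp add: binomial_ring)
  finally show ?thesis .
qed

lemma nn_integral_tree_gen_le:
  fixes \<alpha> x :: real and h :: "nat \<Rightarrow> real"
  assumes \<alpha>: "0 \<le> \<alpha>" "\<alpha> \<le> 1" and x: "0 \<le> x" and h: "\<And>d. 0 \<le> h d"
    and step: "\<And>d. \<alpha> ^ d * h (Suc d) ^ 2 + (1 - \<alpha> ^ d) * x \<le> h d"
  shows "(\<integral>\<^sup>+zl. ennreal (x ^ snd zl * h n ^ fst zl) \<partial>tree_gen \<alpha> n) \<le> ennreal (h 0)"
proof (induction n)
  case (Suc n)
  have p: "0 \<le> \<alpha> ^ n" "\<alpha> ^ n \<le> 1" using \<alpha> by (auto simp: power_le_one)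
  have "(\<integral>\<^sup>+zl. ennreal (x ^ snd zl * h (Suc n) ^ fst zl) \<partial>tree_gen \<alpha> (Suc n))
      = (\<integral>\<^sup>+zl. ennreal (x ^ snd zl) *
           (\<integral>\<^sup>+s. ennreal (x ^ (fst zl - s) * (h (Suc n) ^ 2) ^ s) \<partial>binomial_pmf (fst zl) (\<alpha> ^ n)) \<partial>tree_gen \<alpha> n)"
    using x h by (auto simp: case_prod_beta power_add power_mult ennreal_mult mult.assoc nn_integral_cmult[symmetric] intro!: nn_integral_cong)
  also have "\<dots> = (\<integral>\<^sup>+zl. ennreal (x ^ snd zl) * ennreal ((\<alpha> ^ n * h (Suc n) ^ 2 + (1 - \<alpha> ^ n) * x) ^ fst zl) \<partial>tree_gen \<alpha> n)"
    using p x by (intro nn_integral_cong arg_cong2[where f="(*)"] refl nn_integral_binomial_pmf_power) auto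
  also have "\<dots> \<le> (\<integral>\<^sup>+zl. ennreal (x ^ snd zl * h n ^ fst zl) \<partial>tree_gen \<alpha> n)"
    using p x h by (auto simp: ennreal_mult[symmetric] intro!: nn_integral_mono ennreal_leI mult_left_mono power_mono step)
  also have "\<dots> \<le> ennreal (h 0)" by (rule Suc.IH)
  finally show ?case .
qed simp

lemma prob_tree_gen_leaves_gt_le:
  fixes \<alpha> x :: real and h :: "nat \<Rightarrow> real"
  assumes \<alpha>: "0 \<le> \<alpha>" "\<alpha> \<le> 1" and x: "1 \<le> x" and h: "\<And>d. 1 \<le> h d"
    and step: "\<And>d. \<alpha> ^ d * h (Suc d) ^ 2 + (1 - \<alpha> ^ d) * x \<le> h d"
  shows "measure_pmf.prob (tree_gen \<alpha> n) {(z, l). l > k} \<le> h 0 / x ^ (k + 1)"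
proof -
  let ?A = "{(z, l). l > k} :: (nat \<times> nat) set"
  have "ennreal (x ^ (k + 1) * measure_pmf.prob (tree_gen \<alpha> n) ?A)
      = (\<integral>\<^sup>+zl. ennreal (x ^ (k + 1)) * indicator ?A zl \<partial>tree_gen \<alpha> n)"
    using x by (simp add: ennreal_mult measure_pmf.emeasure_eq_measure nn_integral_cmult_indicator)
  also have "\<dots> \<le> (\<integral>\<^sup>+zl. ennreal (x ^ snd zl * h n ^ fst zl) \<partial>tree_gen \<alpha> n)"
  proof (intro nn_integral_mono)
    fix zl :: "nat \<times> nat"
    have "x ^ (k + 1) \<le> x ^ snd zl * h n ^ fst zl" if "k < snd zl"
    proof -
      have "x ^ (k + 1) \<le> x ^ snd zl" using that x by (intro power_increasing) auto
      also have "\<dots> \<le> x ^ snd zl * h n ^ fst zl" using x h[of n] by (simp add: one_le_power)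
      finally show ?thesis .
    qed
    then show "ennreal (x ^ (k + 1)) * indicator ?A zl \<le> ennreal (x ^ snd zl * h n ^ fst zl)"
      by (auto simp: indicator_def case_prod_beta intro: ennreal_leI)
  qed
  also have "\<dots> \<le> ennreal (h 0)"
    using \<alpha> x h step by (intro nn_integral_tree_gen_le) (auto intro: order_trans[OF zero_le_one])
  finally have "x ^ (k + 1) * measure_pmf.prob (tree_gen \<alpha> n) ?A \<le> h 0"
    using h[of 0] by (simp add: ennreal_le_iff)
  then show ?thesis
    using x by (simp add: field_simps)
qed

text \<open>Above depth \<open>D\<close> the squaring of \<open>h (Suc d)\<close> is absorbed by the doubling exponent even
  for split probability 1; from depth \<open>D\<close> on \<open>h\<close> is constant and splits are rare enough.\<close>

lemma doubly_exponential_supersolution: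
  fixes \<alpha> x :: real
  assumes \<alpha>: "0 \<le> \<alpha>" "\<alpha> \<le> 1" and x: "1 \<le> x" and small: "16 * \<alpha> ^ D * x \<le> 1"
  shows "\<alpha> ^ d * ((8 * x) ^ 2 ^ (D - Suc d) / 2) ^ 2 + (1 - \<alpha> ^ d) * x \<le> (8 * x) ^ 2 ^ (D - d) / 2"
proof -
  have p: "0 \<le> \<alpha> ^ d" "\<alpha> ^ d \<le> 1" using \<alpha> by (auto simp: power_le_one)
  show ?thesis
  proof (cases "D \<le> d")
    case True
    have e: "(8 * x) ^ 2 ^ (D - Suc d) / 2 = 4 * x" "(8 * x) ^ 2 ^ (D - d) / 2 = 4 * x"
      using True by auto
    have "\<alpha> ^ d * (16 * x) \<le> \<alpha> ^ D * (16 * x)"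
      using True \<alpha> x by (intro mult_right_mono power_decreasing) auto
    also have "\<dots> \<le> 1" using small by (simp add: mult_ac)
    finally have "\<alpha> ^ d * (16 * x) * x \<le> 1 * x" using x by (intro mult_right_mono) auto
    then have "\<alpha> ^ d * (4 * x) ^ 2 \<le> x" by (simp add: power2_eq_square mult_ac)
    moreover have "(1 - \<alpha> ^ d) * x \<le> x" using p x by (simp add: algebra_simps)
    ultimately show ?thesis unfolding e using x by linarith
  next
    case False
    define y where "y = (8 * x) ^ 2 ^ (D - Suc d)"
    have "D - d = Suc (D - Suc d)" using False by simp
    then have y2: "(8 * x) ^ 2 ^ (D - d) = y ^ 2" by (simp only: y_def power_Suc2 power_mult)
    have y8: "8 * x \<le> y" unfolding y_def using x by (intro self_le_power) auto
    have "\<alpha> ^ d * (y / 2) ^ 2 \<le> y ^ 2 / 4" using p by (simp add: mult_left_le_one_le power_divide)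
    moreover have "(1 - \<alpha> ^ d) * x \<le> x" using p x by (simp add: algebra_simps)
    moreover have "y * 4 \<le> y * y" using x y8 by (intro mult_left_mono) auto
    then have "x \<le> y ^ 2 / 4" unfolding power2_eq_square using x y8 by linarith
    ultimately show ?thesis unfolding y2 y_def[symmetric] by linarith
  qed
qed

lemma mult_power_div_power_le_powr:
  fixes c x :: real
  assumes x: "0 < x" and cx: "1 \<le> c * x" and mk: "2 * m \<le> k"
  shows "(c * x) ^ m / x ^ k \<le> (c / x) powr (real k / 2)"
proof -
  have c: "0 < c" using x cx by (smt (verit) mult_nonpos_nonneg)
  have xk: "x ^ k = x powr (real k / 2) * x powr (real k / 2)"
    using x by (simp add: powr_add[symmetric] powr_realpow)
  have "(c * x) ^ m = (c * x) powr real m" using c x by (simp add: powr_realpow)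
  also have "\<dots> \<le> (c * x) powr (real k / 2)" using mk cx by (intro powr_mono) auto
  finally have "(c * x) ^ m / x ^ k \<le> (c * x) powr (real k / 2) / x ^ k"
    using x by (simp add: divide_right_mono)
  also have "\<dots> = (c / x) powr (real k / 2)"
    unfolding xk using c x by (simp add: powr_mult powr_divide)
  finally show ?thesis .
qed
lemma prob_tree_gen_leaves_gt_dyadic:
  fixes \<alpha> :: real
  assumes \<alpha>: "0 < \<alpha>" "\<alpha> < 1/2" and D: "4 \<le> D" and k: "2 ^ (D + 1) \<le> k" "k < 2 ^ (D + 2)"
  shows "measure_pmf.prob (tree_gen \<alpha> n) {(z, l). l > k} \<le> (512 / real k) powr (real k / 2)"
proof -
  define x where "x = 1 / (16 * \<alpha> ^ D)"
  have "\<alpha> ^ D \<le> (1/2) ^ D" using \<alpha> by (intro power_mono) auto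
  also have "\<dots> \<le> (1/2) ^ 4" using D by (intro power_decreasing) auto
  finally have x1: "1 \<le> x" using \<alpha> by (simp add: x_def field_simps)
  have small: "16 * \<alpha> ^ D * x = 1" using \<alpha> by (simp add: x_def)
  have "1 \<le> (8 * x) ^ 2 ^ (D - d) / 2" for d
    using self_le_power[of "8 * x" "2 ^ (D - d)"] x1 by simp
  then have "measure_pmf.prob (tree_gen \<alpha> n) {(z, l). l > k} \<le> ((8 * x) ^ 2 ^ (D - 0) / 2) / x ^ (k + 1)"
    using \<alpha> x1 small doubly_exponential_supersolution[of \<alpha> x D]
    by (intro prob_tree_gen_leaves_gt_le[where h = "\<lambda>d. (8 * x) ^ 2 ^ (D - d) / 2"]) auto
  also have "\<dots> \<le> (8 * x) ^ 2 ^ D / x ^ k"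
    using x1 by (intro frac_le) (auto intro: power_increasing)
  also have "\<dots> \<le> (8 / x) powr (real k / 2)"
    using x1 k(1) by (intro mult_power_div_power_le_powr) auto
  also have "\<dots> \<le> (512 / real k) powr (real k / 2)"
  proof (rule powr_mono2)
    have "0 < k" using k(1) zero_less_power[of "2::nat" "D + 1"] by linarith
    have "real k * \<alpha> ^ D < 4 * (2 * \<alpha>) ^ D"
      using k(2) of_nat_less_iff[of k "4 * 2 ^ D", where 'a = real] \<alpha>
      by (simp add: power_mult_distrib mult_strict_right_mono)
    also have "\<dots> \<le> 4" using \<alpha> power_le_one[of "2 * \<alpha>" D] by simp
    finally show "8 / x \<le> 512 / real k" using \<open>0 < k\<close> by (simp add: x_def field_simps)
  qed (use x1 in auto)
  finally show ?thesis .
qed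

lemma leaf_tail_le_1: "leaf_tail \<alpha> k \<le> 1"
  unfolding leaf_tail_def by (intro cSUP_least measure_pmf.prob_le_1) auto

lemma leaf_tail_le_powr:
  fixes \<alpha> :: real
  assumes \<alpha>: "0 < \<alpha>" "\<alpha> < 1/2" and k: "32 \<le> k"
  shows "leaf_tail \<alpha> k \<le> (512 / real k) powr (real k / 2)"
proof -
  obtain E where E: "2 ^ E \<le> k" "k < 2 ^ (E + 1)" using ex_power_ivl1[of 2 k] k by auto
  have "(2::nat) ^ 5 < 2 ^ (E + 1)" using k E(2) by simp
  then have "5 < E + 1" by (rule power_less_imp_less_exp[rotated]) simp
  define D where "D = E - 1"
  have D: "E = D + 1" "4 \<le> D" using \<open>5 < E + 1\<close> by (auto simp: D_def)
  show ?thesis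
    unfolding leaf_tail_def using \<alpha> E D
    by (intro cSUP_least prob_tree_gen_leaves_gt_dyadic) auto
qed

lemma bounded_eventually_superexp_bound:
  fixes f :: "nat \<Rightarrow> real" and c :: real
  assumes le_1: "\<And>k. f k \<le> 1" and c: "0 \<le> c"
    and eventually: "\<And>k. N \<le> k \<Longrightarrow> f k \<le> exp (- c * real k * ln (real k))"
  shows "\<exists>C > 0. \<forall>k \<ge> 1. f k \<le> C * exp (- c * real k * ln (real k))"
proof (intro exI conjI allI impI)
  define C where "C = exp (c * real N * ln (real N))"
  show "0 < C" by (simp add: C_def)
  fix k :: nat assume "1 \<le> k"
  show "f k \<le> C * exp (- c * real k * ln (real k))"
  proof (cases "N \<le> k")
    case True
    have "1 \<le> C" unfolding C_def using c by (cases "N = 0") auto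
    then show ?thesis using eventually[OF True] by (smt (verit) exp_gt_zero mult_le_cancel_right1)
  next
    case False
    then have "c * (real k * ln (real k)) \<le> c * (real N * ln (real N))"
      using \<open>1 \<le> k\<close> c by (intro mult_left_mono mult_mono) auto
    then have "1 \<le> C * exp (- c * real k * ln (real k))"
      by (simp add: C_def exp_add[symmetric])
    then show ?thesis using le_1[of k] by linarith
  qed
qed

lemma leaf_tail_le_exp_k_ln_k:
  fixes \<alpha> :: real
  assumes \<alpha>: "0 < \<alpha>" "\<alpha> < 1/2" and k: "512 ^ 2 \<le> k"
  shows "leaf_tail \<alpha> k \<le> exp (- (1/4) * real k * ln (real k))"
proof -
  have "(512::real) ^ 2 \<le> real k" using k by (metis of_nat_le_iff of_nat_numeral of_nat_power)
  then have "ln (512 ^ 2) \<le> ln (real k)" by (subst ln_le_cancel_iff) auto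
  then have "2 * ln 512 \<le> ln (real k)" using ln_realpow[of 512 2] by simp
  then have "real k / 2 * ln (512 / real k) \<le> - (1/4) * real k * ln (real k)"
    using k by (simp add: ln_div algebra_simps mult_left_mono)
  moreover have "leaf_tail \<alpha> k \<le> exp (real k / 2 * ln (512 / real k))"
    using leaf_tail_le_powr[OF \<alpha>, of k] k by (simp add: powr_def)
  ultimately show ?thesis by (meson exp_le_cancel_iff order_trans)
qed

theorem corollary2:
  fixes \<alpha> :: real
  assumes "0 < \<alpha>" and "\<alpha> < 1/2"
  shows "\<exists>C > 0. \<exists>C_K > 0. \<forall>k::nat. k \<ge> 2 \<longrightarrow>
           leaf_tail \<alpha> k \<le> C * exp (- C_K * real k * ln (real k))"
proof -
  obtain C where "C > 0" "\<forall>k \<ge> 1. leaf_tail \<alpha> k \<le> C * exp (- (1/4) * real k * ln (real k))"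
    using bounded_eventually_superexp_bound[where f = "leaf_tail \<alpha>" and c = "1/4" and N = "512 ^ 2"]
      leaf_tail_le_1 leaf_tail_le_exp_k_ln_k[OF assms] by auto
  then show ?thesis by (intro exI[of _ C] conjI exI[of _ "1/4"]) auto
qed

end
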